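(* A unital hom-associative algebra $(V,\star,\alpha,1)$ is of type $I_1$ if and only if it is of type $II$.
   Context: Let $k$ be a commutative ring. A unital hom-associative algebra is a tuple $(V,\star,\alpha,1)$ where $V$ is a $k$-module, $\star:V\times V\to V$ is $k$-bilinear, $\alpha:V\to V$ is $k$-linear, and $1\in V$ satisfies $1\star x=x\star 1=x$ for all $x\in V$. It is of type $T$ if the identity for $T$ holds for all $x,y,z\in V$: $I_1$: $\alpha(x)\star(y\star z)=(x\star y)\star\alpha(z)$; $II$: $x\star\alpha(y\star z)=\alpha(x\star y)\star z$. *)

theory Defs
  imports Main "HOL.Modules"
begin

text \<open>A k-module V is modelled by a scalar multiplication scale :: 'k \<Rightarrow> 'v \<Rightarrow> 'v
  satisfying the axioms of the library locale module (k a commutative ring with 1).\<close>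

definition bilinear_map ::
  "('k::comm_ring_1 \<Rightarrow> 'v::ab_group_add \<Rightarrow> 'v) \<Rightarrow> ('v \<Rightarrow> 'v \<Rightarrow> 'v) \<Rightarrow> bool" where
  "bilinear_map scale mul \<longleftrightarrow>
     (\<forall>x y z. mul (x + y) z = mul x z + mul y z) \<and>
     (\<forall>x y z. mul x (y + z) = mul x y + mul x z) \<and>
     (\<forall>c x y. mul (scale c x) y = scale c (mul x y)) \<and>
     (\<forall>c x y. mul x (scale c y) = scale c (mul x y))"

definition unital_hom_assoc_algebra ::
  "('k::comm_ring_1 \<Rightarrow> 'v::ab_group_add \<Rightarrow> 'v) \<Rightarrow> ('v \<Rightarrow> 'v \<Rightarrow> 'v) \<Rightarrow> ('v \<Rightarrow> 'v) \<Rightarrow> 'v \<Rightarrow> bool" where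
  "unital_hom_assoc_algebra scale mul \<alpha> e \<longleftrightarrow>
     module scale \<and> bilinear_map scale mul \<and> module_hom scale scale \<alpha> \<and>
     (\<forall>x. mul e x = x \<and> mul x e = x)"

definition type_I1 :: "('v \<Rightarrow> 'v \<Rightarrow> 'v) \<Rightarrow> ('v \<Rightarrow> 'v) \<Rightarrow> bool" where
  "type_I1 mul \<alpha> \<longleftrightarrow> (\<forall>x y z. mul (\<alpha> x) (mul y z) = mul (mul x y) (\<alpha> z))"

definition type_II :: "('v \<Rightarrow> 'v \<Rightarrow> 'v) \<Rightarrow> ('v \<Rightarrow> 'v) \<Rightarrow> bool" where
  "type_II mul \<alpha> \<longleftrightarrow> (\<forall>x y z. mul x (\<alpha> (mul y z)) = mul (\<alpha> (mul x y)) z)"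

end

theory Submission
  imports Defs
begin

(* Only the two-sided unit e of the multiplication is needed.  Moving alpha across both products then turns
     identity I1 into identity II.
   - Specialising identity II at x = e and at z = e shows that alpha is a bimodule
     map: alpha (y * z) = alpha y * z and x * alpha y = alpha (x * y).  Pulling alpha
     out of both sides of identity I1 and pushing it back in reduces I1 to II. *)

lemma unital_hom_assoc_algebra_unit:
  assumes "unital_hom_assoc_algebra scale mul \<alpha> e"
  shows "\<And>x. mul e x = x" and "\<And>x. mul x e = x"
  using assms unfolding unital_hom_assoc_algebra_def by auto

lemma type_I1_balanced:
  assumes I1: "type_I1 mul \<alpha>"
    and left_unit: "\<And>x. mul e x = x" and right_unit: "\<And>x. mul x e = x"
  shows "mul (\<alpha> x) z = mul x (\<alpha> z)"
proof -
  have "mul (\<alpha> x) (mul e z) = mul (mul x e) (\<alpha> z)"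
    using I1 unfolding type_I1_def by blast
  then show ?thesis by (simp add: left_unit right_unit)
qed

lemma type_I1_imp_type_II:
  assumes I1: "type_I1 mul \<alpha>"
    and left_unit: "\<And>x. mul e x = x" and right_unit: "\<And>x. mul x e = x"
  shows "type_II mul \<alpha>"
  unfolding type_II_def
proof (intro allI)
  fix x y z
  note balanced = type_I1_balanced[OF I1 left_unit right_unit]
  have "mul x (\<alpha> (mul y z)) = mul (\<alpha> x) (mul y z)" by (simp add: balanced)
  also have "\<dots> = mul (mul x y) (\<alpha> z)" using I1 unfolding type_I1_def by blast
  also have "\<dots> = mul (\<alpha> (mul x y)) z" by (simp add: balanced)
  finally show "mul x (\<alpha> (mul y z)) = mul (\<alpha> (mul x y)) z" .
qed

lemma type_II_left_linear:
  assumes II: "type_II mul \<alpha>" and left_unit: "\<And>x. mul e x = x"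
  shows "\<alpha> (mul y z) = mul (\<alpha> y) z"
proof -
  have "mul e (\<alpha> (mul y z)) = mul (\<alpha> (mul e y)) z"
    using II unfolding type_II_def by blast
  then show ?thesis by (simp only: left_unit)
qed

lemma type_II_right_linear:
  assumes II: "type_II mul \<alpha>" and right_unit: "\<And>x. mul x e = x"
  shows "mul x (\<alpha> y) = \<alpha> (mul x y)"
proof -
  have "mul x (\<alpha> (mul y e)) = mul (\<alpha> (mul x y)) e"
    using II unfolding type_II_def by blast
  then show ?thesis by (simp add: right_unit)
qed

lemma type_II_imp_type_I1:
  assumes II: "type_II mul \<alpha>"
    and left_unit: "\<And>x. mul e x = x" and right_unit: "\<And>x. mul x e = x"
  shows "type_I1 mul \<alpha>"
  unfolding type_I1_def
proof (intro allI)
  fix x y z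
  note left_linear = type_II_left_linear[OF II left_unit]
  note right_linear = type_II_right_linear[OF II right_unit]
  have "mul (\<alpha> x) (mul y z) = \<alpha> (mul x (mul y z))" by (simp only: left_linear)
  also have "\<dots> = mul x (\<alpha> (mul y z))" by (simp only: right_linear)
  also have "\<dots> = mul (\<alpha> (mul x y)) z" using II unfolding type_II_def by blast
  also have "\<dots> = \<alpha> (mul (mul x y) z)" by (simp only: left_linear)
  also have "\<dots> = mul (mul x y) (\<alpha> z)" by (simp only: right_linear)
  finally show "mul (\<alpha> x) (mul y z) = mul (mul x y) (\<alpha> z)" .
qed

theorem proposition2p4:
  fixes scale :: "'k::comm_ring_1 \<Rightarrow> 'v::ab_group_add \<Rightarrow> 'v"
    and mul :: "'v \<Rightarrow> 'v \<Rightarrow> 'v" and \<alpha> :: "'v \<Rightarrow> 'v" and e :: 'v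
  assumes "unital_hom_assoc_algebra scale mul \<alpha> e"
  shows "type_I1 mul \<alpha> \<longleftrightarrow> type_II mul \<alpha>"
proof -
  note unit = unital_hom_assoc_algebra_unit[OF assms]
  show ?thesis
    using type_I1_imp_type_II[OF _ unit] type_II_imp_type_I1[OF _ unit] by blast
qed

end
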